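(* For every $n\in\mathbb{N}_0$ and every $l\in\{0,\ldots,n\}$ the polynomials $A_n^l$ defined in the context satisfy $$\mathbf{x}\,A_{n}^{l}=\frac{1}{2(n+1)}\Big[(2n+3)\,A_{n+1}^{l}-(2l+1)\,\widehat{A_{n+1}^{l}}\Big]$$ and $$A_{n+1}^{l}=\frac{n+1}{2(n-l+1)(n+l+2)}\Big[(2n+3)\,\mathbf{x}\,A_{n}^{l}+(2l+1)\,\overline{\mathbf{x}}\,\widehat{A_{n}^{l}}\Big],$$ where products are quaternion products.
   Context: $\mathbb{H}$: real quaternions with basis $\mathbf{e}_0=1,\mathbf{e}_1,\mathbf{e}_2,\mathbf{e}_3$, $\mathbf{e}_i\mathbf{e}_j+\mathbf{e}_j\mathbf{e}_i=-2\delta_{ij}$ ($i,j=1,2,3$), $\mathbf{e}_1\mathbf{e}_2=\mathbf{e}_3$. A point $(x_0,x_1,x_2)\in\mathbb{R}^3$ is identified with $\mathbf{x}=x_0+x_1\mathbf{e}_1+x_2\mathbf{e}_2$, and $\overline{\mathbf{x}}=x_0-x_1\mathbf{e}_1-x_2\mathbf{e}_2$. For $g=\sum_{i=0}^3 g^i\mathbf{e}_i$ (real $g^i$) put $\widehat{g}:=g^0-g^1\mathbf{e}_1-g^2\mathbf{e}_2+g^3\mathbf{e}_3$. Spherical coordinates: $x_0=r\cos\theta$, $x_1=r\sin\theta\cos\varphi$, $x_2=r\sin\theta\sin\varphi$. Let $P_k$ be the Legendre polynomials and $P_k^m(t)=(1-t^2)^{m/2}\frac{d^m}{dt^m}P_k(t)$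 the associated Legendre functions (no Condon–Shortley phase; $P_k^m=0$ for $m>k$). For $n\in\mathbb{N}_0$, $0\le m\le n+1$ put $$\mathcal{A}^{m,n}(\theta)=\tfrac12\Big(\sin^2\theta\,\tfrac{d}{dt}[P_{n+1}^m(t)]_{t=\cos\theta}+(n+1)\cos\theta\,P_{n+1}^m(\cos\theta)\Big).$$ For $n\in\mathbb{N}_0$, $l=0,\ldots,n$ define $$A_n^l(\mathbf{x})=\frac{2^{l+1}n!\,r^n}{(n+l+2)!}\Big[(n+l+2)\mathcal{A}^{l,n}(\theta)\big(\cos l\varphi-\sin l\varphi\,\mathbf{e}_3\big)+\mathcal{A}^{l+1,n}(\theta)\big(\cos((l+1)\varphi)\,\mathbf{e}_1+\sin((l+1)\varphi)\,\mathbf{e}_2\big)\Big];$$ each $A_n^l$ is a homogeneous monogenic ($\bar\partial A_n^l=0$, $\bar\partial=\partial_{x_0}+\mathbf{e}_1\partial_{x_1}+\mathbf{e}_2\partial_{x_2}$ acting from the left) polynomial of degree $n$ in $x_0,x_1,x_2$ (e.g. $A_0^0=1$, $A_1^1=x_1-x_2\mathbf{e}_3$). *)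

theory Defs
  imports "HOL-Analysis.Analysis" "HOL-Computational_Algebra.Polynomial"
begin

text \<open>A quaternion g = g0 + g1 e1 + g2 e2 + g3 e3, with e1 e2 = e3 and
  e_i e_j + e_j e_i = -2 delta_ij (Hamilton's convention i = e1, j = e2, k = e3).\<close>

datatype quat = Quat (qc0: real) (qc1: real) (qc2: real) (qc3: real)

definition qadd :: "quat \<Rightarrow> quat \<Rightarrow> quat" where
  "qadd p q = Quat (qc0 p + qc0 q) (qc1 p + qc1 q) (qc2 p + qc2 q) (qc3 p + qc3 q)"

definition qsub :: "quat \<Rightarrow> quat \<Rightarrow> quat" where
  "qsub p q = Quat (qc0 p - qc0 q) (qc1 p - qc1 q) (qc2 p - qc2 q) (qc3 p - qc3 q)"

definition qscale :: "real \<Rightarrow> quat \<Rightarrow> quat" where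
  "qscale c q = Quat (c * qc0 q) (c * qc1 q) (c * qc2 q) (c * qc3 q)"

text \<open>Quaternion product (e1 e2 = e3, e2 e3 = e1, e3 e1 = e2, e_i^2 = -1).\<close>
definition qmul :: "quat \<Rightarrow> quat \<Rightarrow> quat" where
  "qmul p q = Quat
     (qc0 p * qc0 q - qc1 p * qc1 q - qc2 p * qc2 q - qc3 p * qc3 q)
     (qc0 p * qc1 q + qc1 p * qc0 q + qc2 p * qc3 q - qc3 p * qc2 q)
     (qc0 p * qc2 q - qc1 p * qc3 q + qc2 p * qc0 q + qc3 p * qc1 q)
     (qc0 p * qc3 q + qc1 p * qc2 q - qc2 p * qc1 q + qc3 p * qc0 q)"

definition qhat :: "quat \<Rightarrow> quat" where
  "qhat g = Quat (qc0 g) (- qc1 g) (- qc2 g) (qc3 g)"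

definition qpoint :: "real \<Rightarrow> real \<Rightarrow> real \<Rightarrow> quat" where
  "qpoint x0 x1 x2 = Quat x0 x1 x2 0"

definition qpoint_bar :: "real \<Rightarrow> real \<Rightarrow> real \<Rightarrow> quat" where
  "qpoint_bar x0 x1 x2 = Quat x0 (- x1) (- x2) 0"

definition legendre_poly :: "nat \<Rightarrow> real poly" where
  "legendre_poly k = smult (1 / (2 ^ k * fact k)) ((pderiv ^^ k) ([:-1, 0, 1:] ^ k))"

text \<open>P_k^m(t) = (1-t^2)^(m/2) (d/dt)^m P_k(t), no Condon--Shortley phase.\<close>
definition assoc_legendre :: "nat \<Rightarrow> nat \<Rightarrow> real \<Rightarrow> real" where
  "assoc_legendre k m t = sqrt (1 - t\<^sup>2) ^ m * poly ((pderiv ^^ m) (legendre_poly k)) t"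

definition calA :: "nat \<Rightarrow> nat \<Rightarrow> real \<Rightarrow> real" where
  "calA m n \<theta> = (1/2) * ((sin \<theta>)\<^sup>2 * deriv (assoc_legendre (n + 1) m) (cos \<theta>)
                      + real (n + 1) * cos \<theta> * assoc_legendre (n + 1) m (cos \<theta>))"

text \<open>A_n^l at the point with spherical coordinates (r, theta, phi).\<close>
definition A_sph :: "nat \<Rightarrow> nat \<Rightarrow> real \<Rightarrow> real \<Rightarrow> real \<Rightarrow> quat" where
  "A_sph n l r \<theta> \<phi> =
     (let c = 2 ^ (l + 1) * fact n * r ^ n / fact (n + l + 2);
          a = real (n + l + 2) * calA l n \<theta>;
          b = calA (l + 1) n \<theta>
      in Quat (c * a * cos (real l * \<phi>))
              (c * b * cos (real (l + 1) * \<phi>))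
              (c * b * sin (real (l + 1) * \<phi>))
              (- (c * a * sin (real l * \<phi>))))"

end

theory Submission
  imports Defs
begin

(*
  Write A_n^l = A_shape C B (l phi) phi, i.e. C (cos l phi - sin l phi e3) + B (cos (l+1)phi e1 +
  sin (l+1)phi e2). Left multiplication by x = r cos theta + r sin theta (cos phi e1 + sin phi e2)
  preserves this shape and acts on the coefficients as (C, B) -> r (C cos theta - B sin theta,
  B cos theta + C sin theta), while the hat involution replaces B by -B. So if A_{n+1}^l has
  coefficients (C', B'), both identities say x A_n^l has coefficients ((n-l+1)/(n+1) C',
  (n+l+2)/(n+1) B'); the second identity is the first one solved for A_{n+1}^l.

  The key observation is calA m n theta = (n+m+1)/2 P_n^m(cos theta). Then the two coefficient
  identities are the classical recurrences (t = cos theta, s = sin theta)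
    (n-m+1) P_{n+1}^m = (n+m+1) t P_n^m - s P_n^{m+1},   P_{n+1}^{m+1} = t P_n^{m+1} + (n+m+1) s P_n^m,
  which come from P'_{k+1} = t P'_k + (k+1) P_k and the Legendre equation, both read off Rodrigues'
  formula and differentiated m times.
*)

section \<open>Higher derivatives of polynomials\<close>

lemma higher_pderiv_Suc: "(pderiv ^^ Suc m) p = (pderiv ^^ m) (pderiv p)"
  by (simp add: funpow_swap1)

lemma higher_pderiv_of_nat_mult:
  "(pderiv ^^ m) (of_nat c * p) = of_nat c * (pderiv ^^ m) (p :: 'a::idom poly)"
  by (induction m) (simp_all add: pderiv_mult)

lemma higher_pderiv_mult_linear:
  fixes a p :: "'a::idom poly"
  assumes "pderiv (pderiv a) = 0"
  shows "(pderiv ^^ Suc j) (a * p) =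
           a * (pderiv ^^ Suc j) p + of_nat (Suc j) * pderiv a * (pderiv ^^ j) p"
proof (induction j)
  case 0
  show ?case by (simp add: pderiv_mult)
next
  case (Suc j)
  then show ?case
    by (simp add: pderiv_add pderiv_mult assms algebra_simps)
qed

lemma higher_pderiv_mult_quadratic:
  fixes a p :: "'a::idom poly"
  assumes "pderiv (pderiv (pderiv a)) = 0"
  shows "(pderiv ^^ Suc (Suc j)) (a * p) =
           a * (pderiv ^^ Suc (Suc j)) p
           + of_nat (Suc (Suc j)) * pderiv a * (pderiv ^^ Suc j) p
           + of_nat (Suc (Suc j) choose 2) * pderiv (pderiv a) * (pderiv ^^ j) p"
proof (induction j)
  case 0
  have "Suc (Suc 0) choose 2 = 1"
    by (simp add: numeral_2_eq_2)
  then show ?case by (simp add: pderiv_add pderiv_mult assms algebra_simps)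
next
  case (Suc j)
  have "Suc (Suc (Suc j)) choose 2 = (Suc (Suc j) choose 2) + Suc (Suc j)"
    by (simp add: numeral_2_eq_2)
  with Suc show ?case
    by (simp add: pderiv_add pderiv_mult assms algebra_simps)
qed

section \<open>Legendre polynomials\<close>

(* The polynomials t and t^2 - 1, kept behind definitions so that the simplifier does not rewrite
   products with them into pCons normal form. *)
definition X_poly :: "'a::comm_ring_1 poly" where
  "X_poly = [:0, 1:]"

definition X2_minus_1_poly :: "'a::comm_ring_1 poly" where
  "X2_minus_1_poly = [:-1, 0, 1:]"

lemma poly_X_poly [simp]: "poly X_poly t = t"
  by (simp add: X_poly_def)

lemma poly_X2_minus_1_poly [simp]: "poly X2_minus_1_poly t = t\<^sup>2 - 1"
  by (simp add: X2_minus_1_poly_def power2_eq_square)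

lemma pderiv_X_poly [simp]: "pderiv X_poly = (1 :: 'a::idom poly)"
  by (simp add: X_poly_def pderiv_pCons)

lemma pderiv_X2_minus_1_poly [simp]: "pderiv X2_minus_1_poly = (2 * X_poly :: 'a::idom poly)"
  by (simp add: X2_minus_1_poly_def X_poly_def pderiv_pCons numeral_poly)

lemma legendre_poly_Rodrigues:
  "(pderiv ^^ k) (X2_minus_1_poly ^ k) = smult (2 ^ k * fact k) (legendre_poly k)"
  by (simp add: legendre_poly_def X2_minus_1_poly_def)

lemma pderiv_X2_minus_1_poly_power:
  "pderiv (X2_minus_1_poly ^ Suc k :: real poly) = of_nat (2 * Suc k) * X_poly * X2_minus_1_poly ^ k"
  unfolding pderiv_power_Suc pderiv_X2_minus_1_poly
  by (simp add: poly_eq_poly_eq_iff[symmetric] fun_eq_iff algebra_simps)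

lemma X2_minus_1_poly_mult_pderiv_power:
  "X2_minus_1_poly * pderiv (X2_minus_1_poly ^ k :: real poly) = of_nat (2 * k) * X_poly * X2_minus_1_poly ^ k"
proof (cases k)
  case (Suc j)
  show ?thesis
    unfolding Suc pderiv_X2_minus_1_poly_power by (simp add: algebra_simps)
qed simp

lemma pderiv_legendre_poly_Suc:
  "pderiv (legendre_poly (Suc k)) = X_poly * pderiv (legendre_poly k) + of_nat (Suc k) * legendre_poly k"
proof -
  let ?u = "\<lambda>k. X2_minus_1_poly ^ k :: real poly"
  have "smult (2 ^ Suc k * fact (Suc k)) (pderiv (legendre_poly (Suc k)))
      = (pderiv ^^ Suc k) (pderiv (?u (Suc k)))"
    by (simp only: legendre_poly_Rodrigues[symmetric] pderiv_smult[symmetric] funpow_swap1)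
  also have "\<dots> = of_nat (2 * Suc k)
      * (X_poly * (pderiv ^^ Suc k) (?u k) + of_nat (Suc k) * (pderiv ^^ k) (?u k))"
    by (simp only: pderiv_X2_minus_1_poly_power mult.assoc higher_pderiv_of_nat_mult
        higher_pderiv_mult_linear pderiv_X_poly pderiv_1 mult_1 mult_1_right)
  also have "\<dots> = smult (2 ^ Suc k * fact (Suc k))
      (X_poly * pderiv (legendre_poly k) + of_nat (Suc k) * legendre_poly k)"
    by (simp add: higher_pderiv_Suc legendre_poly_Rodrigues pderiv_smult
        poly_eq_poly_eq_iff[symmetric] fun_eq_iff algebra_simps)
  finally show ?thesis
    by (rule smult_cancel[rotated]) simp
qed

lemma Rodrigues_poly_ode:
  fixes k :: nat and R :: "real poly"
  defines "R \<equiv> (pderiv ^^ k) (X2_minus_1_poly ^ k)"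
  shows "X2_minus_1_poly * pderiv (pderiv R) + 2 * X_poly * pderiv R = of_nat (k * (k + 1)) * R"
proof (cases k)
  case 0
  then show ?thesis by (simp add: R_def)
next
  case (Suc j)
  have low_degree: "pderiv (pderiv X_poly) = (0 :: real poly)"
    "pderiv (pderiv (pderiv X2_minus_1_poly)) = (0 :: real poly)"
    by (simp_all add: pderiv_mult)
  define u where "u = (X2_minus_1_poly ^ k :: real poly)"
  have R_derivs: "(pderiv ^^ Suc k) (pderiv u) = pderiv (pderiv R)"
    "(pderiv ^^ k) (pderiv u) = pderiv R" "(pderiv ^^ j) (pderiv u) = R"
    unfolding R_def u_def Suc by (simp_all only: higher_pderiv_Suc[symmetric] funpow.simps o_apply)
  have Leibniz: "(pderiv ^^ Suc k) (X2_minus_1_poly * pderiv u)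
      = X2_minus_1_poly * pderiv (pderiv R) + of_nat (Suc k) * (2 * X_poly) * pderiv R
        + of_nat (Suc k choose 2) * 2 * R"
    using higher_pderiv_mult_quadratic[OF low_degree(2), of j "pderiv u"]
    by (simp only: R_derivs Suc[symmetric] pderiv_X2_minus_1_poly) (simp add: pderiv_mult)
  have "(pderiv ^^ Suc k) (X2_minus_1_poly * pderiv u)
      = of_nat (2 * k) * (X_poly * pderiv R + of_nat (Suc k) * R)"
    unfolding u_def X2_minus_1_poly_mult_pderiv_power mult.assoc higher_pderiv_of_nat_mult
      higher_pderiv_mult_linear[OF low_degree(1)]
    by (simp add: R_def)
  moreover have "(Suc k choose 2) * 2 = Suc k * k"
    by (induction k) (simp_all add: numeral_2_eq_2)
  then have "of_nat (Suc k choose 2) * 2 = (of_nat (Suc k * k) :: real poly)"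
    by (metis of_nat_mult of_nat_numeral)
  ultimately have "poly (X2_minus_1_poly * pderiv (pderiv R) + 2 * X_poly * pderiv R) x
      = poly (of_nat (k * (k + 1)) * R) x" for x
    using arg_cong[OF Leibniz, of "\<lambda>p. poly p x"] by (simp add: algebra_simps)
  then show ?thesis
    by (simp add: poly_eq_poly_eq_iff[symmetric] fun_eq_iff)
qed

lemma legendre_poly_ode:
  "X2_minus_1_poly * pderiv (pderiv (legendre_poly k)) + 2 * X_poly * pderiv (legendre_poly k)
     = of_nat (k * (k + 1)) * legendre_poly k"
proof -
  have "smult (2 ^ k * fact k)
          (X2_minus_1_poly * pderiv (pderiv (legendre_poly k)) + 2 * X_poly * pderiv (legendre_poly k))
      = smult (2 ^ k * fact k) (of_nat (k * (k + 1)) * legendre_poly k)"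
    using Rodrigues_poly_ode[of k]
    by (simp add: legendre_poly_Rodrigues pderiv_smult smult_add_right)
  then show ?thesis
    by (rule smult_cancel[rotated]) simp
qed

lemma higher_pderiv_Suc_legendre_poly_Suc:
  "(pderiv ^^ Suc m) (legendre_poly (Suc k))
     = X_poly * (pderiv ^^ Suc m) (legendre_poly k) + of_nat (m + k + 1) * (pderiv ^^ m) (legendre_poly k)"
proof (induction m)
  case 0
  show ?case using pderiv_legendre_poly_Suc by simp
next
  case (Suc m)
  then show ?case by (simp add: pderiv_add pderiv_mult algebra_simps)
qed

lemma higher_pderiv_legendre_poly_ode:
  "X2_minus_1_poly * (pderiv ^^ Suc (Suc m)) (legendre_poly k)
     + of_nat (2 * (m + 1)) * X_poly * (pderiv ^^ Suc m) (legendre_poly k)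
   = (of_nat (k * (k + 1)) - of_nat (m * (m + 1))) * (pderiv ^^ m) (legendre_poly k)"
proof (induction m)
  case 0
  show ?case using legendre_poly_ode by simp
next
  case (Suc m)
  from arg_cong[OF Suc.IH, of pderiv] show ?case
    by (simp add: pderiv_add pderiv_mult pderiv_diff algebra_simps)
qed

lemma higher_pderiv_legendre_poly_Suc:
  "smult (real k - real m + 1) ((pderiv ^^ m) (legendre_poly (Suc k)))
     = of_nat (k + m + 1) * X_poly * (pderiv ^^ m) (legendre_poly k)
       + X2_minus_1_poly * (pderiv ^^ Suc m) (legendre_poly k)"
proof -
  have "poly (smult (real k - real m + 1) ((pderiv ^^ m) (legendre_poly (Suc k)))) x
      = poly (of_nat (k + m + 1) * X_poly * (pderiv ^^ m) (legendre_poly k)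
              + X2_minus_1_poly * (pderiv ^^ Suc m) (legendre_poly k)) x" for x
  proof -
    define F where "F j = poly ((pderiv ^^ (m + j)) (legendre_poly k)) x" for j
    define G where "G j = poly ((pderiv ^^ (m + j)) (legendre_poly (Suc k))) x" for j
    have G1: "G 1 = x * F 1 + (m + k + 1) * F 0"
      using arg_cong[OF higher_pderiv_Suc_legendre_poly_Suc[of m k], of "\<lambda>p. poly p x"]
      by (simp add: F_def G_def)
    have G2: "G 2 = x * F 2 + (m + k + 2) * F 1"
      using arg_cong[OF higher_pderiv_Suc_legendre_poly_Suc[of "Suc m" k], of "\<lambda>p. poly p x"]
      by (simp add: F_def G_def numeral_2_eq_2)
    have ode_F: "(x\<^sup>2 - 1) * F 2 + 2 * (m + 1) * x * F 1 = (real k * (k + 1) - real m * (m + 1)) * F 0"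
      using arg_cong[OF higher_pderiv_legendre_poly_ode[of m k], of "\<lambda>p. poly p x"]
      by (simp add: F_def numeral_2_eq_2 algebra_simps)
    have ode_G: "(x\<^sup>2 - 1) * G 2 + 2 * (m + 1) * x * G 1 = ((real k + 1) * (k + 2) - real m * (m + 1)) * G 0"
      using arg_cong[OF higher_pderiv_legendre_poly_ode[of m "Suc k"], of "\<lambda>p. poly p x"]
      by (simp add: G_def numeral_2_eq_2 algebra_simps)
    \<comment> \<open>The Legendre equation of P_{k+1} expresses its undifferentiated term through derivatives,
      which the recurrence reduces to derivatives of P_k.\<close>
    have "(real k + m + 2) * ((real k - m + 1) * G 0) = ((real k + 1) * (k + 2) - real m * (m + 1)) * G 0"
      by (simp add: algebra_simps)
    also have "\<dots> = x * ((x\<^sup>2 - 1) * F 2 + 2 * (m + 1) * x * F 1)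
        + (m + k + 2) * (x\<^sup>2 - 1) * F 1 + 2 * (m + 1) * (m + k + 1) * x * F 0"
      unfolding ode_G[symmetric] G1 G2 by (simp add: algebra_simps)
    also have "\<dots> = (real k + m + 2) * ((k + m + 1) * x * F 0 + (x\<^sup>2 - 1) * F 1)"
      unfolding ode_F by (simp add: algebra_simps)
    finally show ?thesis
      by (simp add: F_def G_def)
  qed
  then show ?thesis
    by (simp add: poly_eq_poly_eq_iff[symmetric] fun_eq_iff)
qed

lemma higher_pderiv_legendre_poly_from_Suc:
  "smult (real k + 1 - real m) (X_poly * (pderiv ^^ m) (legendre_poly (Suc k)))
     - X2_minus_1_poly * (pderiv ^^ Suc m) (legendre_poly (Suc k))
   = of_nat (k + m + 1) * (pderiv ^^ m) (legendre_poly k)"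
proof -
  have "poly (smult (real k + 1 - real m) (X_poly * (pderiv ^^ m) (legendre_poly (Suc k)))
        - X2_minus_1_poly * (pderiv ^^ Suc m) (legendre_poly (Suc k))) x
      = poly (of_nat (k + m + 1) * (pderiv ^^ m) (legendre_poly k)) x" for x
  proof -
    define F where "F j = poly ((pderiv ^^ (m + j)) (legendre_poly k)) x" for j
    define G where "G j = poly ((pderiv ^^ (m + j)) (legendre_poly (Suc k))) x" for j
    have G1: "G 1 = x * F 1 + (m + k + 1) * F 0"
      using arg_cong[OF higher_pderiv_Suc_legendre_poly_Suc[of m k], of "\<lambda>p. poly p x"]
      by (simp add: F_def G_def)
    have G0: "(real k - m + 1) * G 0 = (k + m + 1) * x * F 0 + (x\<^sup>2 - 1) * F 1"
      using arg_cong[OF higher_pderiv_legendre_poly_Suc[of k m], of "\<lambda>p. poly p x"]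
      by (simp add: F_def G_def)
    have "(real k + 1 - m) * x * G 0 - (x\<^sup>2 - 1) * G 1
        = x * ((k + m + 1) * x * F 0 + (x\<^sup>2 - 1) * F 1) - (x\<^sup>2 - 1) * (x * F 1 + (m + k + 1) * F 0)"
      unfolding G0[symmetric] G1 by (simp add: algebra_simps)
    also have "\<dots> = (k + m + 1) * F 0"
      by (simp add: algebra_simps power2_eq_square)
    finally show ?thesis
      by (simp add: F_def G_def)
  qed
  then show ?thesis
    by (simp add: poly_eq_poly_eq_iff[symmetric] fun_eq_iff)
qed

section \<open>Associated Legendre functions\<close>

lemma assoc_legendre_has_derivative:
  fixes x :: real
  assumes "x\<^sup>2 < 1"
  shows "(assoc_legendre k m has_real_derivative
           sqrt (1 - x\<^sup>2) ^ m * (poly ((pderiv ^^ Suc m) (legendre_poly k)) x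
             - real m * x * poly ((pderiv ^^ m) (legendre_poly k)) x / (1 - x\<^sup>2))) (at x)"
proof -
  define s where "s = sqrt (1 - x\<^sup>2)"
  define p where "p = (pderiv ^^ m) (legendre_poly k)"
  have s: "0 < s" "s\<^sup>2 = 1 - x\<^sup>2"
    using assms by (simp_all add: s_def)
  have "((\<lambda>y. sqrt (1 - y\<^sup>2)) has_real_derivative - x / s) (at x)"
    unfolding s_def using s(1)[unfolded s_def]
    by (auto intro!: derivative_eq_intros simp: field_simps)
  from DERIV_power[OF this, of m]
  have "((\<lambda>y. sqrt (1 - y\<^sup>2) ^ m) has_real_derivative - real m * x * s ^ m / s\<^sup>2) (at x)"
    by (rule DERIV_cong)
      (use s(1) in \<open>cases m, simp_all only: s_def[symmetric], simp_all add: field_simps power2_eq_square\<close>)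
  from DERIV_mult[OF this poly_DERIV[of p x]] show ?thesis
    unfolding assoc_legendre_def[abs_def] using s
    by (simp add: p_def s_def algebra_simps)
qed

lemma deriv_assoc_legendre:
  fixes x :: real
  assumes "x\<^sup>2 < 1"
  shows "(1 - x\<^sup>2) * deriv (assoc_legendre k m) x
     = sqrt (1 - x\<^sup>2) ^ m * ((1 - x\<^sup>2) * poly ((pderiv ^^ Suc m) (legendre_poly k)) x
         - real m * x * poly ((pderiv ^^ m) (legendre_poly k)) x)"
  using DERIV_imp_deriv[OF assoc_legendre_has_derivative[OF assms]] assms
  by (simp add: field_simps)

lemma sqrt_1_minus_cos_squared:
  "0 \<le> \<theta> \<Longrightarrow> \<theta> \<le> pi \<Longrightarrow> sqrt (1 - (cos \<theta>)\<^sup>2) = sin \<theta>"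
  by (simp add: sin_squared_eq[symmetric] sin_ge_zero)

lemma assoc_legendre_Suc_Suc:
  "assoc_legendre (Suc n) (Suc m) x
     = x * assoc_legendre n (Suc m) x + real (n + m + 1) * sqrt (1 - x\<^sup>2) * assoc_legendre n m x"
  using arg_cong[OF higher_pderiv_Suc_legendre_poly_Suc[of m n], of "\<lambda>p. poly p x"]
  by (simp add: assoc_legendre_def algebra_simps)

lemma assoc_legendre_Suc:
  assumes "x\<^sup>2 \<le> 1"
  shows "(real n - real m + 1) * assoc_legendre (Suc n) m x
     = real (n + m + 1) * x * assoc_legendre n m x - sqrt (1 - x\<^sup>2) * assoc_legendre n (Suc m) x"
proof -
  define s where "s = sqrt (1 - x\<^sup>2)"
  define F where "F j = poly ((pderiv ^^ (m + j)) (legendre_poly n)) x" for j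
  have s_sq: "x\<^sup>2 - 1 = - s\<^sup>2"
    using assms by (simp add: s_def)
  have poly_recurrence: "(real n - m + 1) * poly ((pderiv ^^ m) (legendre_poly (Suc n))) x
      = (n + m + 1) * x * F 0 + (x\<^sup>2 - 1) * F 1"
    using arg_cong[OF higher_pderiv_legendre_poly_Suc[of n m], of "\<lambda>p. poly p x"]
    by (simp add: F_def)
  have "(real n - m + 1) * assoc_legendre (Suc n) m x
      = s ^ m * ((real n - m + 1) * poly ((pderiv ^^ m) (legendre_poly (Suc n))) x)"
    by (simp add: assoc_legendre_def s_def)
  also have "\<dots> = s ^ m * ((n + m + 1) * x * F 0 - s\<^sup>2 * F 1)"
    unfolding poly_recurrence s_sq by simp
  also have "\<dots> = real (n + m + 1) * x * assoc_legendre n m x - s * assoc_legendre n (Suc m) x"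
    unfolding assoc_legendre_def s_def[symmetric] by (simp add: F_def algebra_simps power2_eq_square)
  finally show ?thesis
    unfolding s_def .
qed

lemma calA_eq_assoc_legendre:
  assumes "0 \<le> \<theta>" "\<theta> \<le> pi"
  shows "calA m n \<theta> = real (n + m + 1) / 2 * assoc_legendre n m (cos \<theta>)"
proof -
  define t s where "t = cos \<theta>" and "s = sin \<theta>"
  define G where "G j = poly ((pderiv ^^ (m + j)) (legendre_poly (Suc n))) t" for j
  have sqrt_s: "sqrt (1 - t\<^sup>2) = s"
    unfolding s_def t_def using sqrt_1_minus_cos_squared[OF assms] .
  have s_sq: "s\<^sup>2 = 1 - t\<^sup>2"
    unfolding s_def t_def by (simp add: sin_squared_eq)
  have deriv: "s\<^sup>2 * deriv (assoc_legendre (Suc n) m) t = s ^ m * (s\<^sup>2 * G 1 - real m * t * G 0)"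
  proof (cases "s = 0")
    case True
    \<comment> \<open>At t = \<plusminus>1 the derivative is a junk value, but it is multiplied by s^2 = 0.\<close>
    then show ?thesis by (cases m) simp_all
  next
    case False
    then have "t\<^sup>2 < 1"
      using s_sq zero_less_power2[of s] by linarith
    with deriv_assoc_legendre[of t "Suc n" m] show ?thesis
      by (simp add: G_def sqrt_s s_sq)
  qed
  have "calA m n \<theta>
      = 1 / 2 * (s\<^sup>2 * deriv (assoc_legendre (Suc n) m) t + (n + 1) * t * assoc_legendre (Suc n) m t)"
    by (simp add: calA_def s_def t_def)
  also have "\<dots> = 1 / 2 * (s ^ m * (s\<^sup>2 * G 1 - m * t * G 0) + (n + 1) * t * (s ^ m * G 0))"
    unfolding deriv by (simp add: assoc_legendre_def sqrt_s G_def)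
  also have "\<dots> = s ^ m / 2 * ((real n + 1 - real m) * t * G 0 - (t\<^sup>2 - 1) * G 1)"
    unfolding s_sq by (simp add: algebra_simps)
  also have "\<dots> = s ^ m / 2 * (real (n + m + 1) * poly ((pderiv ^^ m) (legendre_poly n)) t)"
    using arg_cong[OF higher_pderiv_legendre_poly_from_Suc[of n m], of "\<lambda>p. poly p t"]
    by (simp add: G_def algebra_simps)
  also have "\<dots> = real (n + m + 1) / 2 * assoc_legendre n m t"
    by (simp add: assoc_legendre_def sqrt_s)
  finally show ?thesis
    unfolding t_def .
qed

section \<open>Quaternions of the shape of A_n^l\<close>

definition A_shape :: "real \<Rightarrow> real \<Rightarrow> real \<Rightarrow> real \<Rightarrow> quat" where
  "A_shape C B a \<phi> = Quat (C * cos a) (B * cos (a + \<phi>)) (B * sin (a + \<phi>)) (- (C * sin a))"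

lemma qmul_qpoint_A_shape:
  "qmul (qpoint u (v * cos \<phi>) (v * sin \<phi>)) (A_shape C B a \<phi>)
     = A_shape (u * C - v * B) (u * B + v * C) a \<phi>"
proof -
  have pythagoras: "cos \<phi> * cos \<phi> + sin \<phi> * sin \<phi> = 1"
    by (rule sin_cos_squared_add3)
  show ?thesis
    unfolding qmul_def qpoint_def A_shape_def quat.sel quat.inject
  proof (intro conjI)
    show "u * (C * cos a) - v * cos \<phi> * (B * cos (a + \<phi>)) - v * sin \<phi> * (B * sin (a + \<phi>))
        - 0 * - (C * sin a) = (u * C - v * B) * cos a"
      using pythagoras unfolding cos_add sin_add by algebra
    show "u * - (C * sin a) + v * cos \<phi> * (B * sin (a + \<phi>)) - v * sin \<phi> * (B * cos (a + \<phi>))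
        + 0 * (C * cos a) = - ((u * C - v * B) * sin a)"
      using pythagoras unfolding cos_add sin_add by algebra
  qed (simp_all add: cos_add sin_add algebra_simps)
qed

lemma qhat_qmul: "qhat (qmul p q) = qmul (qhat p) (qhat q)"
  by (simp add: qmul_def qhat_def)

lemma qhat_qpoint: "qhat (qpoint a b c) = qpoint_bar a b c"
  by (simp add: qhat_def qpoint_def qpoint_bar_def)

lemma qhat_A_shape: "qhat (A_shape C B a \<phi>) = A_shape C (- B) a \<phi>"
  by (simp add: qhat_def A_shape_def)

lemma qscale_A_shape: "qscale k (A_shape C B a \<phi>) = A_shape (k * C) (k * B) a \<phi>"
  by (simp add: qscale_def A_shape_def)

lemma qadd_A_shape:
  "qadd (A_shape C B a \<phi>) (A_shape C' B' a \<phi>) = A_shape (C + C') (B + B') a \<phi>"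
  by (simp add: qadd_def A_shape_def algebra_simps)

lemma qsub_A_shape:
  "qsub (A_shape C B a \<phi>) (A_shape C' B' a \<phi>) = A_shape (C - C') (B - B') a \<phi>"
  by (simp add: qsub_def A_shape_def algebra_simps)

lemma A_shape_recurrences:
  fixes N L :: real
  assumes "N + 1 \<noteq> 0" "N - L + 1 \<noteq> 0" "N + L + 2 \<noteq> 0"
    and P: "P = A_shape ((N - L + 1) / (N + 1) * C) ((N + L + 2) / (N + 1) * B) a \<phi>"
    and Q: "Q = A_shape C B a \<phi>"
  shows "P = qscale (1 / (2 * (N + 1))) (qsub (qscale (2 * N + 3) Q) (qscale (2 * L + 1) (qhat Q)))
    \<and> Q = qscale ((N + 1) / (2 * (N - L + 1) * (N + L + 2)))
            (qadd (qscale (2 * N + 3) P) (qscale (2 * L + 1) (qhat P)))"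
proof -
  define \<alpha> \<beta> \<gamma> where "\<alpha> = (N - L + 1) / (N + 1)" and "\<beta> = (N + L + 2) / (N + 1)"
    and "\<gamma> = (N + 1) / (2 * (N - L + 1) * (N + L + 2))"
  have sums: "(2 * N + 3) * x - (2 * L + 1) * x = 2 * (N - L + 1) * x"
    "(2 * N + 3) * x - (2 * L + 1) * - x = 2 * (N + L + 2) * x"
    "(2 * N + 3) * x + (2 * L + 1) * x = 2 * (N + L + 2) * x"
    "(2 * N + 3) * x + (2 * L + 1) * - x = 2 * (N - L + 1) * x" for x :: real
    by (simp_all add: algebra_simps)
  have "1 / (2 * (N + 1)) * (2 * (N - L + 1) * x) = \<alpha> * x" for x
    using assms(1) unfolding \<alpha>_def by (simp add: divide_simps) (simp add: algebra_simps)
  moreover have "1 / (2 * (N + 1)) * (2 * (N + L + 2) * x) = \<beta> * x" for x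
    using assms(1) unfolding \<beta>_def by (simp add: divide_simps) (simp add: algebra_simps)
  moreover have "\<gamma> * (2 * (N + L + 2) * (\<alpha> * x)) = x" for x
    using assms(1-3) unfolding \<alpha>_def \<gamma>_def by (simp add: divide_simps) (simp add: algebra_simps)
  moreover have "\<gamma> * (2 * (N - L + 1) * (\<beta> * x)) = x" for x
    using assms(1-3) unfolding \<beta>_def \<gamma>_def by (simp add: divide_simps)
  ultimately show ?thesis
    unfolding P Q \<alpha>_def[symmetric] \<beta>_def[symmetric] \<gamma>_def[symmetric]
      qhat_A_shape qscale_A_shape qadd_A_shape qsub_A_shape sums
    by (simp only:)
qed

section \<open>The polynomials A_n^l\<close>

definition A_scale :: "nat \<Rightarrow> nat \<Rightarrow> real \<Rightarrow> real" where
  "A_scale n l r = 2 ^ l * fact n * r ^ n / fact (n + l + 1)"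

lemma A_scale_Suc: "real (n + l + 2) * A_scale (Suc n) l r = r * (real n + 1) * A_scale n l r"
proof -
  have "fact (Suc n + l + 1) = real (n + l + 2) * fact (n + l + 1)"
    by (simp add: algebra_simps)
  moreover have "fact (Suc n) = (real n + 1) * fact n"
    by (simp add: algebra_simps)
  ultimately show ?thesis
    unfolding A_scale_def by (simp del: of_nat_add of_nat_Suc fact_Suc)
qed

lemma A_sph_eq_A_shape:
  assumes "0 \<le> \<theta>" "\<theta> \<le> pi"
  shows "A_sph n l r \<theta> \<phi>
    = A_shape (A_scale n l r * real (n + l + 1) * assoc_legendre n l (cos \<theta>))
        (A_scale n l r * assoc_legendre n (Suc l) (cos \<theta>)) (real l * \<phi>) \<phi>"
proof -
  define c where "c = 2 ^ (l + 1) * fact n * r ^ n / (fact (n + l + 2) :: real)"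
  have "fact (n + l + 2) = real (n + l + 2) * fact (n + l + 1)"
    by (simp add: algebra_simps)
  then have c: "A_scale n l r = c * real (n + l + 2) / 2"
    unfolding c_def A_scale_def by (simp del: of_nat_add of_nat_Suc fact_Suc)
  have "c * (real (n + l + 2) * calA l n \<theta>) = A_scale n l r * real (n + l + 1) * assoc_legendre n l (cos \<theta>)"
    "c * calA (l + 1) n \<theta> = A_scale n l r * assoc_legendre n (Suc l) (cos \<theta>)"
    unfolding c calA_eq_assoc_legendre[OF assms] by simp_all
  moreover have "real (l + 1) * \<phi> = real l * \<phi> + \<phi>"
    by (simp add: algebra_simps)
  ultimately show ?thesis
    unfolding A_sph_def Let_def A_shape_def c_def[symmetric] by simp
qed

lemma qmul_x_A_sph:
  assumes "0 \<le> \<theta>" "\<theta> \<le> pi"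
  shows "qmul (qpoint (r * cos \<theta>) (r * sin \<theta> * cos \<phi>) (r * sin \<theta> * sin \<phi>)) (A_sph n l r \<theta> \<phi>)
    = A_shape
        ((real n - real l + 1) / (real n + 1)
           * (A_scale (Suc n) l r * real (Suc n + l + 1) * assoc_legendre (Suc n) l (cos \<theta>)))
        ((real n + real l + 2) / (real n + 1)
           * (A_scale (Suc n) l r * assoc_legendre (Suc n) (Suc l) (cos \<theta>)))
        (real l * \<phi>) \<phi>"
proof -
  have "(cos \<theta>)\<^sup>2 \<le> 1"
    by (simp add: abs_square_le_1)
  note recurrences = assoc_legendre_Suc[OF this, of n l] assoc_legendre_Suc_Suc[of n l "cos \<theta>"]
  have "real n + 1 \<noteq> 0"
    by linarith
  then have C_coeff: "(real n - real l + 1) / (real n + 1)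
          * (A_scale (Suc n) l r * real (Suc n + l + 1) * assoc_legendre (Suc n) l (cos \<theta>))
        = r * A_scale n l r * ((real n - real l + 1) * assoc_legendre (Suc n) l (cos \<theta>))"
    using A_scale_Suc[of n l r] by (simp add: field_simps)
  have "(real n + real l + 2) / (real n + 1) * (A_scale (Suc n) l r * assoc_legendre (Suc n) (Suc l) (cos \<theta>))
      = real (n + l + 2) * A_scale (Suc n) l r / (real n + 1) * assoc_legendre (Suc n) (Suc l) (cos \<theta>)"
    by simp
  also have "\<dots> = r * A_scale n l r * assoc_legendre (Suc n) (Suc l) (cos \<theta>)"
    unfolding A_scale_Suc using \<open>real n + 1 \<noteq> 0\<close> by simp
  finally have B_coeff: "(real n + real l + 2) / (real n + 1)
          * (A_scale (Suc n) l r * assoc_legendre (Suc n) (Suc l) (cos \<theta>))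
        = r * A_scale n l r * assoc_legendre (Suc n) (Suc l) (cos \<theta>)" .
  show ?thesis
    unfolding C_coeff B_coeff
    unfolding A_sph_eq_A_shape[OF assms] qmul_qpoint_A_shape recurrences
      sqrt_1_minus_cos_squared[OF assms]
    by (simp add: algebra_simps)
qed

theorem mainTheorem2:
  fixes n l :: nat and r \<theta> \<phi> :: real
  assumes "l \<le> n" and "0 \<le> r" and "0 \<le> \<theta>" and "\<theta> \<le> pi"
  defines "x \<equiv> qpoint (r * cos \<theta>) (r * sin \<theta> * cos \<phi>) (r * sin \<theta> * sin \<phi>)"
      and "xbar \<equiv> qpoint_bar (r * cos \<theta>) (r * sin \<theta> * cos \<phi>) (r * sin \<theta> * sin \<phi>)"
  shows "qmul x (A_sph n l r \<theta> \<phi>) =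
           qscale (1 / (2 * (real n + 1)))
             (qsub (qscale (2 * real n + 3) (A_sph (n + 1) l r \<theta> \<phi>))
                   (qscale (2 * real l + 1) (qhat (A_sph (n + 1) l r \<theta> \<phi>))))
       \<and> A_sph (n + 1) l r \<theta> \<phi> =
           qscale ((real n + 1) / (2 * (real n - real l + 1) * (real n + real l + 2)))
             (qadd (qscale (2 * real n + 3) (qmul x (A_sph n l r \<theta> \<phi>)))
                   (qscale (2 * real l + 1) (qmul xbar (qhat (A_sph n l r \<theta> \<phi>)))))"
proof -
  have "real n + 1 \<noteq> 0" "real n - real l + 1 \<noteq> 0" "real n + real l + 2 \<noteq> 0"
    using assms(1) by linarith+
  note recurrences = A_shape_recurrences[OF this qmul_x_A_sph[OF assms(3,4), of r \<phi> n l]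
      A_sph_eq_A_shape[OF assms(3,4), of "Suc n" l r \<phi>]]
  have xbar: "qmul xbar (qhat (A_sph n l r \<theta> \<phi>)) = qhat (qmul x (A_sph n l r \<theta> \<phi>))"
    unfolding x_def xbar_def qhat_qmul qhat_qpoint ..
  show ?thesis
    unfolding xbar Suc_eq_plus1[symmetric] x_def by (rule recurrences)
qed

end
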